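(* Assume $\mathfrak I$ is compact and let $\mathsf C$ be a positively oriented simple closed contour enclosing $[0,I^+]$. Then for all $i,j\in\mathbb N$: for $n\ge1$, with $n$ factors $\phi$ and $n$ factors $\hat\phi/\lambda_0$ alternating, $$\Big(\phi*\tfrac{\hat\phi}{\lambda_0}*\cdots*\phi*\tfrac{\hat\phi}{\lambda_0}\Big)(i,j)=-\frac1{2\pi\mathrm i}\oint_{\mathsf C}\Big\langle\pi_iQ_i,\frac{Q_j(u)}{x-u}\Big\rangle_{\mathfrak w}\frac{du}{u^n};$$ for $n\ge0$, with $n+1$ factors $\phi$ and $n$ factors $\hat\phi/\lambda_0$ (starting and ending with $\phi$), $$\Big(\phi*\tfrac{\hat\phi}{\lambda_0}*\cdots*\tfrac{\hat\phi}{\lambda_0}*\phi\Big)(i,j)=-\frac1{2\pi\mathrm i}\oint_{\mathsf C}\Big\langle\pi_iQ_i,\frac{\hat Q_j(u)}{x-u}\Big\rangle_{\mathfrak w}\frac{du}{u^n};$$ for $n\ge1$, with $n$ factors of each, starting with $\hat\phi/\lambda_0$ and ending with $\phi$, $$\Big(\tfrac{\hat\phi}{\lambda_0}*\phi*\cdots*\tfrac{\hat\phi}{\lambda_0}*\phi\Big)(i,j)=-\frac1{2\pi\mathrm i}\oint_{\mathsf C}\Big\langle\hat\pi_i\hat Q_i,\frac{\hat Q_j(u)}{x-u}\Big\rangle_{\hat{\mathfrak w}}\frac{du}{u^n};$$ for $n\ge1$, with $n$ factors $\hat\phi/\lambda_0$ and $n-1$ factors $\phi$ (starting and ending with $\hat\phi/\lambda_0$),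 $$\Big(\tfrac{\hat\phi}{\lambda_0}*\phi*\cdots*\phi*\tfrac{\hat\phi}{\lambda_0}\Big)(i,j)=-\frac1{2\pi\mathrm i}\oint_{\mathsf C}\Big\langle\hat\pi_i\hat Q_i,\frac{Q_j(u)}{x-u}\Big\rangle_{\hat{\mathfrak w}}\frac{du}{u^n}.$$
   Context: Let $\lambda_k=\lambda(k)>0$ ($k\ge0$) and $\mu_k=\mu(k)$ with $\mu_0=0$, $\mu_k>0$ ($k\ge1$) be the rates of a birth and death chain on $\mathbb N=\{0,1,\dots\}$ reflecting at $0$, with $\pi_0=1$, $\pi_k=\prod_{i=1}^k\lambda_{i-1}/\mu_i$, and satisfying $\sum_{j\ge0}\frac{1}{\lambda_j\pi_j}\sum_{i=0}^{j}\pi_i=\sum_{j\ge0}\frac{1}{\lambda_j\pi_j}\sum_{i>j}\pi_i=\infty$. Dual rates: $\hat\lambda_k=\mu_{k+1}$, $\hat\mu_k=\lambda_k$; $\hat\pi_0=1$, $\hat\pi_k=\prod_{i=1}^k\mu_i/\lambda_i$. Polynomials $Q_n,\hat Q_n$ (degree $n$) are defined by $Q_{-1}=\hat Q_{-1}=0$, $Q_0=\hat Q_0=1$ and, for $n\ge0$, $-xQ_n(x)=\mu_nQ_{n-1}(x)-(\lambda_n+\mu_n)Q_n(x)+\lambda_nQ_{n+1}(x)$ and $-x\hat Q_n(x)=\lambda_n\hat Q_{n-1}(x)-(\mu_{n+1}+\lambda_n)\hat Q_n(x)+\mu_{n+1}\hat Q_{n+1}(x)$. Assume both associated moment problems are determinate: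 there are unique probability measures $\mathfrak w,\hat{\mathfrak w}$ on $[0,\infty)$ with $\int Q_iQ_j\,d\mathfrak w=\delta_{ij}/\pi_j$ and $\int\hat Q_i\hat Q_j\,d\hat{\mathfrak w}=\delta_{ij}/\hat\pi_j$; then $d\hat{\mathfrak w}(x)=x\,d\mathfrak w(x)/\lambda_0$ and both measures have the same support $\mathfrak I=[I^-,I^+]\subset[0,\infty]$. Write $\langle f,g\rangle_{\mathsf m}=\int f(x)g(x)\,d\mathsf m(x)$ (integration always in the variable $x$; contour integrals are in $u$). Define $\phi(i,j)=\pi_i\mathbf 1(i\le j)$ and $\hat\phi(i,j)=-\hat\pi_i\mathbf 1(i<j)$ for $i,j\in\mathbb N$, and the convolution $(h_1*h_2)(u,v)=\sum_{k\ge0}h_1(u,k)h_2(k,v)$. *)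

theory Defs
  imports "HOL-Analysis.Analysis" "HOL-Probability.Probability"
begin

definition has_contour_integral' :: "(complex \<Rightarrow> complex) \<Rightarrow> complex \<Rightarrow> (real \<Rightarrow> complex) \<Rightarrow> bool"
  where "has_contour_integral' f i g \<equiv>
           ((\<lambda>x. f (g x) * vector_derivative g (at x within {0..1})) has_integral i) {0..1}"

definition contour_integral' :: "(real \<Rightarrow> complex) \<Rightarrow> (complex \<Rightarrow> complex) \<Rightarrow> complex"
  where "contour_integral' g f \<equiv>
     SOME i. has_contour_integral' f i g \<or> (\<not> (\<exists>j. has_contour_integral' f j g) \<and> i = 0)"

definition winding_number' :: "(real \<Rightarrow> complex) \<Rightarrow> complex \<Rightarrow> complex"
  where "winding_number' g z = contour_integral' g (\<lambda>w. 1 / (w - z)) / (2 * pi * \<i>)"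

definition pos_simple_contour_enclosing :: "(real \<Rightarrow> complex) \<Rightarrow> complex set \<Rightarrow> bool"
  where "pos_simple_contour_enclosing g S \<longleftrightarrow>
     valid_path g \<and> simple_path g \<and> pathfinish g = pathstart g \<and>
     (\<forall>z\<in>S. z \<notin> path_image g \<and> winding_number' g z = 1)"

definition bd_pi :: "(nat \<Rightarrow> real) \<Rightarrow> (nat \<Rightarrow> real) \<Rightarrow> nat \<Rightarrow> real"
  where "bd_pi la mu k = (\<Prod>i\<in>{1..k}. la (i - 1) / mu i)"

definition dual_la :: "(nat \<Rightarrow> real) \<Rightarrow> (nat \<Rightarrow> real) \<Rightarrow> nat \<Rightarrow> real"
  where "dual_la la mu k = mu (Suc k)"
definition dual_mu :: "(nat \<Rightarrow> real) \<Rightarrow> (nat \<Rightarrow> real) \<Rightarrow> nat \<Rightarrow> real"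
  where "dual_mu la mu k = la k"

text \<open>Orthogonal polynomials: Q (-1) = 0, Q 0 = 1,
  -x Q n = mu n Q (n-1) - (la n + mu n) Q n + la n Q (n+1).\<close>
fun bdQ :: "(nat \<Rightarrow> real) \<Rightarrow> (nat \<Rightarrow> real) \<Rightarrow> nat \<Rightarrow> 'a::real_field \<Rightarrow> 'a" where
  "bdQ la mu 0 x = 1"
| "bdQ la mu (Suc 0) x = (of_real (la 0 + mu 0) - x) * bdQ la mu 0 x / of_real (la 0)"
| "bdQ la mu (Suc (Suc n)) x =
     ((of_real (la (Suc n) + mu (Suc n)) - x) * bdQ la mu (Suc n) x
       - of_real (mu (Suc n)) * bdQ la mu n x) / of_real (la (Suc n))"

definition orth_measure :: "(nat \<Rightarrow> real) \<Rightarrow> (nat \<Rightarrow> real) \<Rightarrow> real measure \<Rightarrow> bool"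
  where "orth_measure la mu m \<longleftrightarrow>
     prob_space m \<and> sets m = sets borel \<and> emeasure m {..<0} = 0 \<and>
     (\<forall>i j. integrable m (\<lambda>x. bdQ la mu i x * bdQ la mu j x) \<and>
            (\<integral>x. bdQ la mu i x * bdQ la mu j x \<partial>m) = (if i = j then 1 / bd_pi la mu j else 0))"

definition msupport :: "real measure \<Rightarrow> real set"
  where "msupport m = {x. \<forall>e>0. emeasure m {x - e<..<x + e} > 0}"

definition phi :: "(nat \<Rightarrow> real) \<Rightarrow> (nat \<Rightarrow> real) \<Rightarrow> nat \<Rightarrow> nat \<Rightarrow> real"
  where "phi la mu i j = (if i \<le> j then bd_pi la mu i else 0)"

definition phihat :: "(nat \<Rightarrow> real) \<Rightarrow> (nat \<Rightarrow> real) \<Rightarrow> nat \<Rightarrow> nat \<Rightarrow> real"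
  where "phihat la mu i j = (if i < j then - bd_pi (dual_la la mu) (dual_mu la mu) i else 0)"

definition kconv :: "(nat \<Rightarrow> nat \<Rightarrow> real) \<Rightarrow> (nat \<Rightarrow> nat \<Rightarrow> real) \<Rightarrow> nat \<Rightarrow> nat \<Rightarrow> real"
  where "kconv h1 h2 u v = (\<Sum>k. h1 u k * h2 k v)"

fun kconv_list :: "(nat \<Rightarrow> nat \<Rightarrow> real) list \<Rightarrow> nat \<Rightarrow> nat \<Rightarrow> real" where
  "kconv_list [] = (\<lambda>i j. if i = j then 1 else 0)"
| "kconv_list [K] = K"
| "kconv_list (K # L) = kconv K (kconv_list L)"

end

theory Submission
  imports Defs "HOL-Computational_Algebra.Polynomial" "HOL-Complex_Analysis.Complex_Analysis"
begin

text \<open>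
  Write \<open>Qd\<close>, \<open>\<pi>d\<close> for the polynomials and weights of the dual chain. The dual polynomials are
  the partial sums \<open>Qd n = (\<Sum>k\<le>n. \<pi> k * Q k)\<close>, and \<open>x * Qd n = la n * \<pi> n * (Q n - Q (n + 1))\<close>;
  by uniqueness the dual measure \<open>wh\<close> is \<open>x w / la 0\<close>. In terms of the coefficients of a
  polynomial \<open>p\<close> in the two orthogonal bases these identities say that the kernel \<open>phi\<close> turns the
  \<open>wh\<close>-coefficients of \<open>p\<close> into its \<open>w\<close>-coefficients, and that \<open>phihat / la 0\<close> turns the
  \<open>w\<close>-coefficients of \<open>p\<close> into the \<open>wh\<close>-coefficients of \<open>(p - p 0) / x\<close>. So every alternating
  convolution, applied to \<open>Q j\<close> or \<open>Qd j\<close>, is a coefficient of the \<open>n\<close>-fold shift of that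
  polynomial. Analytically, for a measure \<open>M\<close> supported in \<open>[0, b]\<close> and a contour winding once
  around \<open>[0, b]\<close>, the contour integral of \<open>(\<integral>x. f x * q u / (x - u) \<partial>M) / u ^ n\<close> is
  \<open>-2\<pi>i\<close> times the integral of \<open>f\<close> against the \<open>n\<close>-fold shift of \<open>q\<close>: exchange the two
  integrations (Fubini along a polynomial approximation of the contour) and evaluate the inner
  contour integral by partial fractions and Cauchy's integral formula.
\<close>

fun bd_poly :: "(nat \<Rightarrow> real) \<Rightarrow> (nat \<Rightarrow> real) \<Rightarrow> nat \<Rightarrow> real poly" where
  "bd_poly la mu 0 = 1"
| "bd_poly la mu (Suc 0) = smult (1 / la 0) [:la 0 + mu 0, -1:]"
| "bd_poly la mu (Suc (Suc n)) =
     smult (1 / la (Suc n)) ([:la (Suc n) + mu (Suc n), -1:] * bd_poly la mu (Suc n)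
       - smult (mu (Suc n)) (bd_poly la mu n))"

definition poly_of_real :: "real poly \<Rightarrow> 'a::real_field \<Rightarrow> 'a" where
  "poly_of_real p x = poly (map_poly of_real p) x"

lemma poly_of_real_0 [simp]: "poly_of_real 0 x = 0"
  by (simp add: poly_of_real_def)

lemma poly_of_real_pCons [simp]: "poly_of_real (pCons a p) x = of_real a + x * poly_of_real p x"
  by (simp add: poly_of_real_def map_poly_pCons)

lemma poly_of_real_add [simp]: "poly_of_real (p + q) x = poly_of_real p x + poly_of_real q x"
proof -
  have "map_poly of_real (p + q) = map_poly (of_real :: real \<Rightarrow> 'a) p + map_poly of_real q"
    by (rule poly_eqI) (simp add: coeff_map_poly)
  then show ?thesis by (simp add: poly_of_real_def)
qed

lemma poly_of_real_smult [simp]: "poly_of_real (smult c p) x = of_real c * poly_of_real p x"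
  by (simp add: poly_of_real_def map_poly_smult)

lemma poly_of_real_uminus [simp]: "poly_of_real (- p) x = - poly_of_real p x"
  using poly_of_real_smult[of "-1" p x] by simp

lemma poly_of_real_diff [simp]: "poly_of_real (p - q) x = poly_of_real p x - poly_of_real q x"
  using poly_of_real_add[of p "-q" x] by simp

lemma poly_of_real_mult [simp]: "poly_of_real (p * q) x = poly_of_real p x * poly_of_real q x"
  by (induction p) (simp_all add: algebra_simps)

lemma poly_of_real_1 [simp]: "poly_of_real 1 x = 1"
  by (simp add: one_pCons)

lemma poly_of_real_real [simp]: "poly_of_real p (x::real) = poly p x"
  by (induction p) auto

lemma poly_of_real_of_real: "poly_of_real p (of_real x) = of_real (poly p x)"
  by (induction p) auto

lemma bdQ_eq_poly_of_real: "bdQ la mu n x = poly_of_real (bd_poly la mu n) x"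
  by (induction la mu n x rule: bdQ.induct)
     (auto simp: field_simps add_divide_distrib[symmetric])

lemma degree_bd_poly_le: "degree (bd_poly la mu n) \<le> n"
proof (induction la mu n rule: bd_poly.induct)
  case (3 la mu n)
  then show ?case
    by (simp only: bd_poly.simps)
       (intro order.trans[OF degree_smult_le] degree_diff_le order.trans[OF degree_mult_le]
         order.trans[OF degree_smult_le], auto)
qed (auto simp: degree_pCons_le)

lemma coeff_bd_poly_self: "coeff (bd_poly la mu n) n = (-1)^n / (\<Prod>k<n. la k)"
proof (induction la mu n rule: bd_poly.induct)
  case (3 la mu n)
  have "coeff (bd_poly la mu (Suc (Suc n))) (Suc (Suc n)) = - coeff (bd_poly la mu (Suc n)) (Suc n) / la (Suc n)"
    using degree_bd_poly_le[of la mu n] degree_bd_poly_le[of la mu "Suc n"]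
    by (simp add: coeff_eq_0)
  with 3 show ?case by simp
qed simp_all

lemma bd_poly_expansion:
  assumes la: "\<And>k. la k \<noteq> 0" and "degree p \<le> N"
  shows "\<exists>c. p = (\<Sum>k\<le>N. smult (c k) (bd_poly la mu k))"
  using \<open>degree p \<le> N\<close>
proof (induction N arbitrary: p)
  case 0
  then have "p = (\<Sum>k\<le>0. smult (coeff p 0) (bd_poly la mu k))"
    by (simp add: degree_0_id)
  then show ?case by (rule exI[of _ "\<lambda>_. coeff p 0"])
next
  case (Suc N)
  define a where "a = coeff p (Suc N) / coeff (bd_poly la mu (Suc N)) (Suc N)"
  define p' where "p' = p - smult a (bd_poly la mu (Suc N))"
  have "coeff p' (Suc N) = 0"
    using la by (simp add: p'_def a_def coeff_bd_poly_self)
  moreover have "degree p' \<le> Suc N"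
    unfolding p'_def using Suc.prems degree_bd_poly_le
    by (intro degree_diff_le order.trans[OF degree_smult_le]) auto
  ultimately have "degree p' \<le> N"
    by (metis le_SucE leading_coeff_0_iff degree_0 le0)
  then obtain c where c: "p' = (\<Sum>k\<le>N. smult (c k) (bd_poly la mu k))"
    using Suc.IH by blast
  have "p = (\<Sum>k\<le>Suc N. smult ((c(Suc N := a)) k) (bd_poly la mu k))"
    using c by (simp add: p'_def)
  then show ?case by (rule exI[of _ "c(Suc N := a)"])
qed

lemma pCons_coeff_0_poly_shift_1: "pCons (coeff p 0) (poly_shift 1 p) = p"
  by (rule poly_eqI) (auto simp: coeff_pCons coeff_poly_shift split: nat.splits)

lemma poly_shift_poly_shift: "poly_shift m (poly_shift n p) = poly_shift (m + n) p"
  by (rule poly_eqI) (simp add: coeff_poly_shift add.assoc)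

lemma poly_of_real_split_poly_shift:
  "poly_of_real q u = (\<Sum>k<n. of_real (coeff q k) * u ^ k) + u ^ n * poly_of_real (poly_shift n q) u"
proof (induction n arbitrary: q)
  case (Suc n)
  have "poly_of_real q u = of_real (coeff q 0) + u * poly_of_real (poly_shift 1 q) u"
    by (subst pCons_coeff_0_poly_shift_1[of q, symmetric]) (simp only: poly_of_real_pCons)
  also note Suc.IH[of "poly_shift 1 q"]
  also have "(\<Sum>k<Suc n. of_real (coeff q k) * u ^ k)
      = of_real (coeff q 0) + u * (\<Sum>k<n. of_real (coeff q (Suc k)) * u ^ k)"
    by (subst sum.lessThan_Suc_shift) (simp add: sum_distrib_left mult_ac)
  ultimately show ?case
    by (simp add: poly_shift_poly_shift coeff_poly_shift distrib_left mult.assoc)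
qed simp

lemma poly_of_real_div_partial_fractions:
  fixes u a :: "'a::real_field"
  assumes u: "u \<noteq> 0" "u \<noteq> a"
  shows "poly_of_real q u / ((a - u) * u ^ n)
    = (\<Sum>k<n. of_real (coeff q k) * (1 / (u ^ (n - k) * (a - u))))
      - poly_of_real (poly_shift n q) u / (u - a)"
proof -
  have "of_real (coeff q k) * (1 / (u ^ (n - k) * (a - u)))
      = of_real (coeff q k) * u ^ k / ((a - u) * u ^ n)" if "k < n" for k
  proof -
    have "u ^ n = u ^ k * u ^ (n - k)" using that by (simp add: power_add[symmetric])
    then show ?thesis using u by (simp add: field_simps)
  qed
  then have poles: "(\<Sum>k<n. of_real (coeff q k) * (1 / (u ^ (n - k) * (a - u))))
      = (\<Sum>k<n. of_real (coeff q k) * u ^ k / ((a - u) * u ^ n))"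
    by (intro sum.cong) auto
  have shifted: "- (poly_of_real (poly_shift n q) u / (u - a))
      = u ^ n * poly_of_real (poly_shift n q) u / ((a - u) * u ^ n)"
    using u by (simp add: field_simps)
  have "poly_of_real q u / ((a - u) * u ^ n) = (\<Sum>k<n. of_real (coeff q k) * u ^ k / ((a - u) * u ^ n))
      + u ^ n * poly_of_real (poly_shift n q) u / ((a - u) * u ^ n)"
    by (subst poly_of_real_split_poly_shift[of q u n]) (simp add: add_divide_distrib sum_divide_distrib)
  then show ?thesis
    unfolding poles by (simp add: shifted[symmetric])
qed

definition poly_integral :: "real measure \<Rightarrow> real poly \<Rightarrow> real" where
  "poly_integral M p = (\<integral>x. poly p x \<partial>M)"

locale bd_orthogonality =
  fixes la mu :: "nat \<Rightarrow> real" and M :: "real measure"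
  assumes orth: "orth_measure la mu M"
    and la_nonzero: "\<And>k. la k \<noteq> 0"
    and pi_nonzero: "\<And>k. bd_pi la mu k \<noteq> 0"
begin

lemma integrable_poly: "integrable M (\<lambda>x. poly p x)"
proof -
  have int_Q: "integrable M (\<lambda>x. poly (bd_poly la mu k) x)" for k
    using orth by (auto simp: orth_measure_def bdQ_eq_poly_of_real dest: spec[of _ k] spec[of _ 0])
  obtain c where c: "p = (\<Sum>k\<le>degree p. smult (c k) (bd_poly la mu k))"
    using bd_poly_expansion[where la=la and mu=mu, OF la_nonzero order.refl] by blast
  have "integrable M (\<lambda>x. \<Sum>k\<le>degree p. c k * poly (bd_poly la mu k) x)"
    by (intro Bochner_Integration.integrable_sum integrable_mult_right int_Q)
  also have "(\<lambda>x. \<Sum>k\<le>degree p. c k * poly (bd_poly la mu k) x) = poly p"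
    by (subst (2) c) (simp add: poly_sum fun_eq_iff)
  finally show ?thesis .
qed

lemma poly_integral_add: "poly_integral M (p + q) = poly_integral M p + poly_integral M q"
  by (simp add: poly_integral_def integrable_poly)

lemma poly_integral_smult: "poly_integral M (smult c p) = c * poly_integral M p"
  by (simp add: poly_integral_def)

lemma poly_integral_diff: "poly_integral M (p - q) = poly_integral M p - poly_integral M q"
  by (simp add: poly_integral_def integrable_poly)

lemma poly_integral_sum: "poly_integral M (\<Sum>k\<in>A. f k) = (\<Sum>k\<in>A. poly_integral M (f k))"
  by (induction A rule: infinite_finite_induct) (simp_all add: poly_integral_add poly_integral_def[of _ 0])

lemma poly_integral_bd_poly_mult:
  "poly_integral M (bd_poly la mu i * bd_poly la mu j) = (if i = j then 1 / bd_pi la mu j else 0)"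
  using orth by (simp add: orth_measure_def poly_integral_def bdQ_eq_poly_of_real)

lemma poly_integral_bd_poly_mult_combination:
  assumes "k \<le> N"
  shows "poly_integral M (bd_poly la mu k * (\<Sum>l\<le>N. smult (c l) (bd_poly la mu l)))
    = c k / bd_pi la mu k"
proof -
  have "poly_integral M (bd_poly la mu k * (\<Sum>l\<le>N. smult (c l) (bd_poly la mu l)))
      = (\<Sum>l\<le>N. c l * (if k = l then 1 / bd_pi la mu l else 0))"
    by (simp add: sum_distrib_left poly_integral_sum poly_integral_smult poly_integral_bd_poly_mult)
  also have "\<dots> = (\<Sum>l\<le>N. if l = k then c l / bd_pi la mu l else 0)"
    by (intro sum.cong) auto
  also have "\<dots> = c k / bd_pi la mu k"
    using assms by simp
  finally show ?thesis .
qed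

lemma poly_integral_bd_poly_mult_eq_0:
  assumes "degree p < K"
  shows "poly_integral M (bd_poly la mu K * p) = 0"
proof -
  obtain c where c: "p = (\<Sum>l\<le>degree p. smult (c l) (bd_poly la mu l))"
    using bd_poly_expansion[where la=la and mu=mu, OF la_nonzero order.refl] by blast
  have "poly_integral M (bd_poly la mu K * p)
      = poly_integral M (bd_poly la mu K * (\<Sum>l\<le>K. smult ((\<lambda>l. if l \<le> degree p then c l else 0) l) (bd_poly la mu l)))"
    using assms by (subst c) (auto intro!: arg_cong[where f="\<lambda>q. poly_integral M (_ * q)"] sum.mono_neutral_cong_left split: if_splits)
  also have "\<dots> = 0"
    using assms by (subst poly_integral_bd_poly_mult_combination) auto
  finally show ?thesis .
qed

lemma bd_poly_fourier_expansion:
  assumes "degree p \<le> N"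
  shows "p = (\<Sum>k\<le>N. smult (bd_pi la mu k * poly_integral M (bd_poly la mu k * p)) (bd_poly la mu k))"
proof -
  obtain c where c: "p = (\<Sum>k\<le>N. smult (c k) (bd_poly la mu k))"
    using bd_poly_expansion[where la=la and mu=mu, OF la_nonzero assms] by blast
  have "bd_pi la mu k * poly_integral M (bd_poly la mu k * p) = c k" if "k \<le> N" for k
    using that pi_nonzero by (subst c) (simp add: poly_integral_bd_poly_mult_combination)
  then show ?thesis
    by (subst (1) c) (auto intro!: sum.cong)
qed

end

section \<open>The dual chain\<close>

lemma bd_pi_0 [simp]: "bd_pi la mu 0 = 1"
  by (simp add: bd_pi_def)

lemma bd_pi_Suc: "bd_pi la mu (Suc k) = bd_pi la mu k * (la k / mu (Suc k))"
  by (simp add: bd_pi_def prod.nat_ivl_Suc')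

lemma poly_bd_poly_Suc_0: "poly (bd_poly la mu (Suc 0)) x = (la 0 + mu 0 - x) / la 0"
  by (simp add: algebra_simps divide_inverse)

lemma poly_bd_poly_Suc_Suc: "poly (bd_poly la mu (Suc (Suc n))) x =
   ((la (Suc n) + mu (Suc n) - x) * poly (bd_poly la mu (Suc n)) x
      - mu (Suc n) * poly (bd_poly la mu n) x) / la (Suc n)"
  by (simp add: algebra_simps divide_inverse)

declare bd_poly.simps(2,3) [simp del]

locale bd_rates =
  fixes la mu :: "nat \<Rightarrow> real"
  assumes la_pos: "\<And>k. la k > 0" and mu_0: "mu 0 = 0" and mu_pos: "\<And>k. k \<ge> 1 \<Longrightarrow> mu k > 0"
begin

abbreviation "dla \<equiv> dual_la la mu"
abbreviation "dmu \<equiv> dual_mu la mu"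
abbreviation "\<pi> \<equiv> bd_pi la mu"
abbreviation "\<pi>d \<equiv> bd_pi dla dmu"
abbreviation "Q \<equiv> bd_poly la mu"
abbreviation "Qd \<equiv> bd_poly dla dmu"

lemma pi_pos: "\<pi> k > 0"
  by (induction k) (auto simp: bd_pi_Suc la_pos mu_pos)

lemma dual_pi_pos: "\<pi>d k > 0"
  by (induction k) (auto simp: bd_pi_Suc la_pos mu_pos dual_la_def dual_mu_def)

lemma la_nonzero [simp]: "la k \<noteq> 0"
  using la_pos[of k] by simp

lemma dual_pi_mult_pi: "\<pi>d j * \<pi> j * la j = la 0"
proof (induction j)
  case (Suc j)
  have "\<pi>d (Suc j) * \<pi> (Suc j) * la (Suc j)
      = (\<pi>d j * \<pi> j * la j) * (mu (Suc j) / la (Suc j)) * (1 / mu (Suc j)) * la (Suc j)"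
    by (simp add: bd_pi_Suc dual_la_def dual_mu_def field_simps)
  also have "\<dots> = \<pi>d j * \<pi> j * la j"
    using mu_pos[of "Suc j"] by simp
  finally show ?case using Suc by simp
qed simp

lemma pi_Suc_mult_mu: "\<pi> (Suc n) * mu (Suc n) = la n * \<pi> n"
  using mu_pos[of "Suc n"] by (simp add: bd_pi_Suc)

lemma poly_bd_poly_at_0: "poly (Q n) 0 = 1"
proof -
  have "poly (Q n) 0 = 1 \<and> poly (Q (Suc n)) 0 = 1"
    by (induction n) (simp_all add: poly_bd_poly_Suc_0 poly_bd_poly_Suc_Suc mu_0)
  then show ?thesis ..
qed

text \<open>Summing the recurrence against \<open>\<pi>\<close> telescopes since \<open>\<pi> (k + 1) * mu (k + 1) = la k * \<pi> k\<close>.\<close>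

lemma bd_poly_diff_eq_partial_sum:
  "la n * \<pi> n * (poly (Q n) x - poly (Q (Suc n)) x) = x * (\<Sum>k\<le>n. \<pi> k * poly (Q k) x)"
proof (induction n)
  case 0
  then show ?case by (simp add: poly_bd_poly_Suc_0 mu_0 field_simps)
next
  case (Suc n)
  have rec: "la (Suc n) * (poly (Q (Suc n)) x - poly (Q (Suc (Suc n))) x)
      = x * poly (Q (Suc n)) x + mu (Suc n) * (poly (Q n) x - poly (Q (Suc n)) x)"
    by (simp add: poly_bd_poly_Suc_Suc field_simps)
  have "la (Suc n) * \<pi> (Suc n) * (poly (Q (Suc n)) x - poly (Q (Suc (Suc n))) x)
      = \<pi> (Suc n) * (x * poly (Q (Suc n)) x)
        + (\<pi> (Suc n) * mu (Suc n)) * (poly (Q n) x - poly (Q (Suc n)) x)"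
    by (simp only: rec mult.assoc mult.left_commute[of "la _"] distrib_left)
  also have "\<dots> = \<pi> (Suc n) * (x * poly (Q (Suc n)) x) + x * (\<Sum>k\<le>n. \<pi> k * poly (Q k) x)"
    by (simp only: pi_Suc_mult_mu Suc.IH)
  also have "\<dots> = x * (\<Sum>k\<le>Suc n. \<pi> k * poly (Q k) x)"
    by (simp add: algebra_simps)
  finally show ?case .
qed

lemma poly_dual_bd_poly: "poly (Qd n) x = (\<Sum>k\<le>n. \<pi> k * poly (Q k) x)"
proof -
  define S where "S n = (\<Sum>k\<le>n. \<pi> k * poly (Q k) x)" for n
  have S_rec: "S (Suc (Suc n)) = ((mu (Suc (Suc n)) + la (Suc n) - x) * S (Suc n)
      - la (Suc n) * S n) / mu (Suc (Suc n))" for n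
  proof -
    have "mu (Suc (Suc n)) * (S (Suc (Suc n)) - S (Suc n)) = la (Suc n) * (S (Suc n) - S n) - x * S (Suc n)"
      using bd_poly_diff_eq_partial_sum[of "Suc n" x] pi_Suc_mult_mu[of "Suc n"]
      by (simp add: S_def algebra_simps)
    then show ?thesis
      using mu_pos[of "Suc (Suc n)"] by (simp add: field_simps)
  qed
  have "S (Suc 0) = 1 + la 0 / mu 1 * ((la 0 - x) / la 0)"
    by (simp add: S_def poly_bd_poly_Suc_0 mu_0 bd_pi_Suc)
  also have "\<dots> = (mu 1 + la 0 - x) / mu 1"
    using mu_pos[of 1] by (simp add: field_simps)
  finally have S_1: "S (Suc 0) = (mu 1 + la 0 - x) / mu 1" .
  have "poly (Qd n) x = S n \<and> poly (Qd (Suc n)) x = S (Suc n)"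
  proof (induction n)
    case 0
    then show ?case by (simp add: S_1 S_def[of 0] poly_bd_poly_Suc_0 dual_la_def dual_mu_def)
  next
    case (Suc n)
    then show ?case by (simp add: S_rec poly_bd_poly_Suc_Suc dual_la_def dual_mu_def)
  qed
  then show ?thesis by (simp add: S_def)
qed

lemma dual_bd_poly_eq_sum: "Qd n = (\<Sum>k\<le>n. smult (\<pi> k) (Q k))"
  by (rule poly_eq_poly_eq_iff[THEN iffD1]) (simp add: fun_eq_iff poly_dual_bd_poly poly_sum)

lemma x_mult_dual_bd_poly: "[:0, 1:] * Qd n = smult (la n * \<pi> n) (Q n - Q (Suc n))"
  by (rule poly_eq_poly_eq_iff[THEN iffD1])
     (simp add: fun_eq_iff poly_dual_bd_poly bd_poly_diff_eq_partial_sum[symmetric])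

end

locale bd_dual_measures = bd_rates +
  fixes w wh :: "real measure"
  assumes w_orth: "orth_measure la mu w"
    and wh_orth: "orth_measure dla dmu wh"
    and wh_unique: "\<And>m. orth_measure dla dmu m \<Longrightarrow> m = wh"
begin

sublocale w: bd_orthogonality la mu w
proof
  fix k
  show "\<pi> k \<noteq> 0" using pi_pos[of k] by simp
qed (simp_all add: w_orth)

sublocale wh: bd_orthogonality dla dmu wh
proof
  fix k
  show "dla k \<noteq> 0" using mu_pos[of "Suc k"] by (simp add: dual_la_def)
  show "\<pi>d k \<noteq> 0" using dual_pi_pos[of k] by simp
qed (simp add: wh_orth)

lemma sets_w: "sets w = sets borel"
  using w_orth by (simp add: orth_measure_def)

lemma AE_w_nonneg: "AE x in w. 0 \<le> x"
proof (rule AE_I')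
  show "{..<0::real} \<in> null_sets w"
    using w_orth sets_w by (auto simp: orth_measure_def)
qed auto

lemma poly_integral_w_x: "poly_integral w [:0, 1:] = la 0"
proof -
  have "Q 1 * Q 0 = 1 - smult (1 / la 0) [:0, 1:]"
    by (simp add: bd_poly.simps(2) mu_0 one_pCons)
  then have "0 = poly_integral w 1 - (1 / la 0) * poly_integral w [:0, 1:]"
    using w.poly_integral_bd_poly_mult[of 1 0]
    by (simp only: w.poly_integral_diff w.poly_integral_smult) simp
  moreover have "poly_integral w 1 = 1"
    using w.poly_integral_bd_poly_mult[of 0 0] by simp
  ultimately show ?thesis by (simp add: field_simps)
qed

definition x_weighted :: "real measure" where
  "x_weighted = density w (\<lambda>x. ennreal (x / la 0))"

lemma x_weight_measurable [measurable]: "(\<lambda>x. x / la 0) \<in> borel_measurable w"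
  using sets_w by (simp add: measurable_cong_sets[OF sets_w refl])

lemma AE_x_weight_nonneg: "AE x in w. 0 \<le> x / la 0"
  using AE_w_nonneg la_pos[of 0] by (auto elim!: AE_mp)

lemma integral_x_weighted_poly:
  "integrable x_weighted (\<lambda>x. poly p x)"
  "(\<integral>x. poly p x \<partial>x_weighted) = poly_integral w ([:0, 1:] * p) / la 0"
proof -
  have poly_meas: "(\<lambda>x. poly p x) \<in> borel_measurable w"
    unfolding measurable_cong_sets[OF sets_w refl]
    by (intro borel_measurable_continuous_onI continuous_intros)
  have eq: "(\<lambda>x. (x / la 0) *\<^sub>R poly p x) = (\<lambda>x. poly ([:0, 1:] * p) x / la 0)"
    by (auto simp: fun_eq_iff)
  show "integrable x_weighted (\<lambda>x. poly p x)"
    unfolding x_weighted_def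
    by (subst integrable_density[OF poly_meas x_weight_measurable AE_x_weight_nonneg], unfold eq)
       (intro integrable_divide_zero w.integrable_poly)
  show "(\<integral>x. poly p x \<partial>x_weighted) = poly_integral w ([:0, 1:] * p) / la 0"
    unfolding x_weighted_def
    by (subst integral_density[OF poly_meas x_weight_measurable AE_x_weight_nonneg])
       (simp add: eq poly_integral_def)
qed

lemma poly_integral_bd_poly_mult_dual: "poly_integral w (Q m * Qd j) = (if m \<le> j then 1 else 0)"
proof -
  have "poly_integral w (Q m * Qd j) = (\<Sum>k\<le>j. \<pi> k * poly_integral w (Q m * Q k))"
    by (simp add: dual_bd_poly_eq_sum sum_distrib_left w.poly_integral_sum
        w.poly_integral_smult mult.left_commute)
  also have "\<dots> = (\<Sum>k\<le>j. if k = m then 1 else 0)"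
    using w.pi_nonzero by (intro sum.cong) (auto simp: w.poly_integral_bd_poly_mult)
  finally show ?thesis by simp
qed

lemma prob_space_x_weighted: "prob_space x_weighted"
proof (rule prob_spaceI)
  have space: "space x_weighted = UNIV"
    using sets_eq_imp_space_eq[OF sets_w] by (simp add: x_weighted_def)
  have "emeasure x_weighted UNIV = (\<integral>\<^sup>+ x. ennreal (x / la 0) * indicator UNIV x \<partial>w)"
    unfolding x_weighted_def by (rule emeasure_density) (auto simp: sets_w)
  also have "\<dots> = (\<integral>\<^sup>+ x. ennreal (x / la 0) \<partial>w)"
    by simp
  also have "\<dots> = ennreal (\<integral>x. x / la 0 \<partial>w)"
    using w.integrable_poly[of "[:0, 1 / la 0:]"]
    by (intro nn_integral_eq_integral AE_x_weight_nonneg) simp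
  also have "(\<integral>x. x / la 0 \<partial>w) = poly_integral w [:0, 1:] / la 0"
    by (simp add: poly_integral_def)
  finally show "emeasure x_weighted (space x_weighted) = 1"
    by (simp add: space poly_integral_w_x)
qed

lemma AE_x_weighted: "(AE x in w. P x) \<Longrightarrow> (AE x in x_weighted. P x)"
  unfolding x_weighted_def by (subst AE_density) (auto elim!: AE_mp)

lemma orth_measure_x_weighted: "orth_measure dla dmu x_weighted"
  unfolding orth_measure_def
proof (intro conjI allI)
  show "prob_space x_weighted" by (rule prob_space_x_weighted)
  show "sets x_weighted = sets borel" by (simp add: x_weighted_def sets_w)
  have "emeasure x_weighted {..<0} = (\<integral>\<^sup>+ x. ennreal (x / la 0) * indicator {..<0} x \<partial>w)"
    unfolding x_weighted_def by (rule emeasure_density) (auto simp: sets_w)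
  also have "\<dots> = (\<integral>\<^sup>+ x. 0 \<partial>w)"
    using AE_w_nonneg by (intro nn_integral_cong_AE) (auto elim!: AE_mp)
  finally show "emeasure x_weighted {..<0} = 0" by simp
  fix i j
  have QQ: "(\<lambda>x. bdQ dla dmu i x * bdQ dla dmu j x) = (\<lambda>x. poly (Qd i * Qd j) x)"
    by (simp add: bdQ_eq_poly_of_real)
  show "integrable x_weighted (\<lambda>x. bdQ dla dmu i x * bdQ dla dmu j x)"
    unfolding QQ by (rule integral_x_weighted_poly)
  have "[:0, 1:] * (Qd i * Qd j) = smult (la i * \<pi> i) (Q i * Qd j - Q (Suc i) * Qd j)"
    by (simp only: mult.assoc[symmetric] x_mult_dual_bd_poly mult_smult_left left_diff_distrib)
  then have "(\<integral>x. bdQ dla dmu i x * bdQ dla dmu j x \<partial>x_weighted)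
      = la i * \<pi> i * ((if i \<le> j then 1 else 0) - (if Suc i \<le> j then 1 else 0)) / la 0"
    unfolding QQ integral_x_weighted_poly
    by (simp add: w.poly_integral_smult w.poly_integral_diff poly_integral_bd_poly_mult_dual)
  also have "\<dots> = (if i = j then la j * \<pi> j / la 0 else 0)"
    by auto
  also have "la j * \<pi> j / la 0 = 1 / \<pi>d j"
    using dual_pi_mult_pi[of j] dual_pi_pos[of j] by (simp add: divide_simps mult_ac)
  finally show "(\<integral>x. bdQ dla dmu i x * bdQ dla dmu j x \<partial>x_weighted) = (if i = j then 1 / \<pi>d j else 0)" .
qed

lemma wh_eq_x_weighted: "wh = x_weighted"
  using wh_unique[OF orth_measure_x_weighted] by simp

lemma poly_integral_wh: "poly_integral wh p = poly_integral w ([:0, 1:] * p) / la 0"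
  by (simp add: poly_integral_def wh_eq_x_weighted integral_x_weighted_poly)

end

section \<open>Convolutions of the kernels\<close>

lemma kconv_list_Cons: "L \<noteq> [] \<Longrightarrow> kconv_list (K # L) = kconv K (kconv_list L)"
  by (cases L) auto

lemma Cons_concat_replicate: "a # concat (replicate n [b, a]) = concat (replicate n [a, b]) @ [a]"
  by (induction n) auto

context bd_dual_measures
begin

abbreviation "phihat0 \<equiv> (\<lambda>a b. phihat la mu a b / la 0)"

definition w_coeff :: "nat \<Rightarrow> real poly \<Rightarrow> real" where
  "w_coeff i p = \<pi> i * poly_integral w (Q i * p)"

definition wh_coeff :: "nat \<Rightarrow> real poly \<Rightarrow> real" where
  "wh_coeff i p = \<pi>d i * poly_integral wh (Qd i * p)"

lemma w_coeff_eq_integral: "w_coeff i p = (\<integral>x. \<pi> i * poly (Q i) x * poly p x \<partial>w)"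
  by (simp add: w_coeff_def poly_integral_def mult.assoc)

lemma wh_coeff_eq_integral: "wh_coeff i p = (\<integral>x. \<pi>d i * poly (Qd i) x * poly p x \<partial>wh)"
  by (simp add: wh_coeff_def poly_integral_def mult.assoc)

lemma w_coeff_eq_0: "degree p < i \<Longrightarrow> w_coeff i p = 0"
  by (simp add: w_coeff_def w.poly_integral_bd_poly_mult_eq_0)

lemma wh_coeff_eq_0: "degree p < i \<Longrightarrow> wh_coeff i p = 0"
  by (simp add: wh_coeff_def wh.poly_integral_bd_poly_mult_eq_0)

lemma w_coeff_bd_poly: "w_coeff l (Q j) = (if l = j then 1 else 0)"
  using pi_pos[of j] by (simp add: w_coeff_def w.poly_integral_bd_poly_mult)

lemma w_coeff_dual_bd_poly: "w_coeff i (Qd j) = phi la mu i j"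
  by (simp add: w_coeff_def poly_integral_bd_poly_mult_dual phi_def)

lemma wh_coeff_eq_diff: "wh_coeff k p = poly_integral w (Q k * p) - poly_integral w (Q (Suc k) * p)"
proof -
  have "[:0, 1:] * (Qd k * p) = smult (la k * \<pi> k) (Q k * p - Q (Suc k) * p)"
    by (simp only: mult.assoc[symmetric] x_mult_dual_bd_poly mult_smult_left left_diff_distrib)
  then have "wh_coeff k p = \<pi>d k * \<pi> k * la k * (poly_integral w (Q k * p) - poly_integral w (Q (Suc k) * p)) / la 0"
    by (simp add: wh_coeff_def poly_integral_wh w.poly_integral_smult w.poly_integral_diff mult_ac)
  then show ?thesis by (simp add: dual_pi_mult_pi)
qed

lemma w_coeff_eq_phi_sum: "w_coeff i p = (\<Sum>k. phi la mu i k * wh_coeff k p)"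
proof -
  define a where "a k = poly_integral w (Q k * p)" for k
  have "(\<Sum>k. phi la mu i k * wh_coeff k p) = (\<Sum>k\<le>degree p. phi la mu i k * wh_coeff k p)"
    by (rule suminf_finite) (auto simp: wh_coeff_eq_0)
  also have "\<dots> = (\<Sum>k\<in>{i..degree p}. \<pi> i * (a k - a (Suc k)))"
    by (rule sum.mono_neutral_cong_right) (auto simp: phi_def wh_coeff_eq_diff a_def)
  also have "\<dots> = w_coeff i p"
  proof (cases "i \<le> degree p")
    case True
    have "(\<Sum>k\<in>{i..degree p}. a k - a (Suc k)) = a i - a (Suc (degree p))"
      using sum_Suc_diff[of i "degree p" "\<lambda>k. - a k"] True by simp
    moreover have "a (Suc (degree p)) = 0"
      by (simp add: a_def w.poly_integral_bd_poly_mult_eq_0)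
    ultimately show ?thesis
      by (simp add: sum_distrib_left[symmetric] w_coeff_def a_def)
  qed (simp add: w_coeff_eq_0)
  finally show ?thesis ..
qed

lemma poly_integral_dual_bd_poly_mult: "poly_integral w (Qd k * p) = (\<Sum>m\<le>k. w_coeff m p)"
  by (simp add: dual_bd_poly_eq_sum w_coeff_def sum_distrib_right w.poly_integral_sum w.poly_integral_smult)

lemma coeff_0_eq_sum_w_coeff:
  assumes "degree p \<le> N"
  shows "coeff p 0 = (\<Sum>l\<le>N. w_coeff l p)"
proof -
  have "coeff p 0 = poly p 0" by (simp add: poly_0_coeff_0)
  also have "\<dots> = (\<Sum>l\<le>N. w_coeff l p * poly (Q l) 0)"
    by (subst w.bd_poly_fourier_expansion[OF assms]) (simp add: poly_sum w_coeff_def)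
  finally show ?thesis by (simp add: poly_bd_poly_at_0)
qed

text \<open>Dividing by \<open>x\<close> corresponds to the kernel \<open>phihat0\<close>: this is where \<open>wh = x w / \<lambda>\<^sub>0\<close> enters.\<close>

lemma wh_coeff_shift_eq_phihat_sum: "wh_coeff k (poly_shift 1 p) = (\<Sum>l. phihat0 k l * w_coeff l p)"
proof -
  define M where "M = max k (degree p)"
  have "(\<Sum>l. phihat0 k l * w_coeff l p) = (\<Sum>l\<le>M. phihat0 k l * w_coeff l p)"
    by (rule suminf_finite) (auto simp: w_coeff_eq_0 M_def)
  also have "\<dots> = - (\<pi>d k / la 0) * (\<Sum>l\<in>{k<..M}. w_coeff l p)"
    by (subst sum_distrib_left, rule sum.mono_neutral_cong_right) (auto simp: phihat_def)
  also have "(\<Sum>l\<in>{k<..M}. w_coeff l p) = coeff p 0 - poly_integral w (Qd k * p)"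
  proof -
    have "{..M} = {..k} \<union> {k<..M}" by (auto simp: M_def)
    then have "(\<Sum>l\<le>M. w_coeff l p) = (\<Sum>l\<le>k. w_coeff l p) + (\<Sum>l\<in>{k<..M}. w_coeff l p)"
      by (simp only:) (rule sum.union_disjoint, auto)
    then show ?thesis
      by (simp add: coeff_0_eq_sum_w_coeff[of p M] M_def poly_integral_dual_bd_poly_mult)
  qed
  also have "- (\<pi>d k / la 0) * (coeff p 0 - poly_integral w (Qd k * p))
      = \<pi>d k * poly_integral w (Qd k * ([:0, 1:] * poly_shift 1 p)) / la 0"
  proof -
    have "[:0, 1:] * poly_shift 1 p = p - [:coeff p 0:]"
      by (subst (2) pCons_coeff_0_poly_shift_1[of p, symmetric]) simp
    then have "Qd k * ([:0, 1:] * poly_shift 1 p) = Qd k * p - smult (coeff p 0) (Qd k)"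
      by (simp only: right_diff_distrib) simp
    then have "poly_integral w (Qd k * ([:0, 1:] * poly_shift 1 p))
        = poly_integral w (Qd k * p) - coeff p 0 * poly_integral w (Qd k)"
      by (simp only: w.poly_integral_diff w.poly_integral_smult)
    also have "poly_integral w (Qd k) = 1"
      using poly_integral_bd_poly_mult_dual[of 0 k] by simp
    finally show ?thesis
      by (simp only:) (simp add: field_simps)
  qed
  also have "\<dots> = wh_coeff k (poly_shift 1 p)"
    by (simp only: wh_coeff_def poly_integral_wh mult.left_commute[of "[:0, 1:]"] times_divide_eq_right)
  finally show ?thesis ..
qed

lemma kconv_phi: "kconv (phi la mu) (\<lambda>k j. wh_coeff k (P j)) = (\<lambda>i j. w_coeff i (P j))"
  by (simp add: fun_eq_iff kconv_def w_coeff_eq_phi_sum)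

lemma kconv_phihat0: "kconv phihat0 (\<lambda>k j. w_coeff k (P j)) = (\<lambda>i j. wh_coeff i (poly_shift 1 (P j)))"
  unfolding fun_eq_iff kconv_def wh_coeff_shift_eq_phihat_sum by simp

lemma kconv_list_ending_phi:
  "kconv_list (concat (replicate n [phi la mu, phihat0]) @ [phi la mu])
     = (\<lambda>i j. w_coeff i (poly_shift n (Qd j)))"
proof (induction n)
  case 0
  show ?case by (simp add: fun_eq_iff w_coeff_dual_bd_poly)
next
  case (Suc n)
  then show ?case
    by (simp add: kconv_list_Cons kconv_phihat0 kconv_phi poly_shift_poly_shift)
qed

lemma kconv_list_ending_phihat0:
  assumes "n \<ge> 1"
  shows "kconv_list (concat (replicate (n - 1) [phihat0, phi la mu]) @ [phihat0])
     = (\<lambda>i j. wh_coeff i (poly_shift n (Q j)))"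
proof -
  have "kconv_list (concat (replicate m [phihat0, phi la mu]) @ [phihat0])
      = (\<lambda>i j. wh_coeff i (poly_shift (Suc m) (Q j)))" for m
  proof (induction m)
    case 0
    have "kconv phihat0 (\<lambda>k j. w_coeff k (Q j)) i j = phihat0 i j" for i j
      unfolding kconv_def w_coeff_bd_poly by (subst suminf_finite[of "{j}"]) auto
    then have "kconv phihat0 (\<lambda>k j. w_coeff k (Q j)) = phihat0"
      by (simp add: fun_eq_iff)
    then show ?case
      using kconv_phihat0[of "\<lambda>j. Q j"] by simp
  next
    case (Suc m)
    then show ?case
      by (simp add: kconv_list_Cons kconv_phihat0 kconv_phi poly_shift_poly_shift)
  qed
  from this[of "n - 1"] show ?thesis
    using assms by simp
qed

lemma kconv_list_starting_phi:
  assumes "n \<ge> 1"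
  shows "kconv_list (concat (replicate n [phi la mu, phihat0])) = (\<lambda>i j. w_coeff i (poly_shift n (Q j)))"
proof -
  obtain m where "n = Suc m" using assms by (cases n) auto
  then show ?thesis
    using kconv_list_ending_phihat0[of n]
    by (simp add: Cons_concat_replicate kconv_list_Cons kconv_phi)
qed

lemma kconv_list_starting_phihat0:
  assumes "n \<ge> 1"
  shows "kconv_list (concat (replicate n [phihat0, phi la mu])) = (\<lambda>i j. wh_coeff i (poly_shift n (Qd j)))"
proof -
  obtain m where "n = Suc m" using assms by (cases n) auto
  then show ?thesis
    by (simp add: Cons_concat_replicate kconv_list_Cons kconv_list_ending_phi kconv_phihat0
        poly_shift_poly_shift)
qed

end

section \<open>Cauchy integrals along closed paths\<close>

lemma holomorphic_on_poly_of_real: "(\<lambda>u. poly_of_real p u) holomorphic_on A"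
  unfolding poly_of_real_def by (simp add: poly_altdef) (intro holomorphic_intros)

locale closed_valid_path =
  fixes \<gamma> :: "real \<Rightarrow> complex"
  assumes valid: "valid_path \<gamma>" and closed: "pathfinish \<gamma> = pathstart \<gamma>"
begin

lemma has_contour_integral_inverse_sub:
  assumes "z \<notin> path_image \<gamma>" "winding_number \<gamma> z = 1"
  shows "((\<lambda>u. 1 / (u - z)) has_contour_integral (2 * pi * \<i>)) \<gamma>"
proof -
  have "contour_integral \<gamma> (\<lambda>u. 1 / (u - z)) = 2 * pi * \<i>"
    using winding_number_valid_path[OF valid assms(1)] assms(2) by (simp add: field_simps)
  then show ?thesis
    using has_contour_integral_integral[OF contour_integrable_inversediff[OF valid assms(1)]] by simp
qed

lemma has_contour_integral_inverse_power:
  assumes "m \<ge> 2" and "0 \<notin> path_image \<gamma>"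
  shows "((\<lambda>u. 1 / u ^ m) has_contour_integral 0) \<gamma>"
proof -
  define k :: int where "k = 1 - int m"
  have k: "k \<noteq> 0" "k - 1 = - int m" using assms(1) by (simp_all add: k_def)
  have "((\<lambda>u. u powi k / of_int k) has_field_derivative u powi (k - 1)) (at u within - {0})"
    if "u \<in> - {0}" for u
    using that k(1) by (auto intro!: derivative_eq_intros)
  moreover have "path_image \<gamma> \<subseteq> - {0}"
    using assms(2) by blast
  ultimately have "((\<lambda>u. u powi (k - 1)) has_contour_integral
      (pathfinish \<gamma> powi k / of_int k - pathstart \<gamma> powi k / of_int k)) \<gamma>"
    by (intro contour_integral_primitive[OF _ valid])
  then have "((\<lambda>u. u powi (k - 1)) has_contour_integral 0) \<gamma>"
    by (simp add: closed)
  then show ?thesis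
    by (rule has_contour_integral_eq) (simp add: k(2) power_int_minus divide_inverse)
qed

text \<open>Induction on \<open>m\<close> via the partial fractions
  \<open>1 / (u\<^sup>m (a - u)) = (1 / u\<^sup>m + 1 / (u\<^sup>m\<^sup>-\<^sup>1 (a - u))) / a\<close>; the base case uses that
  both \<open>0\<close> and \<open>a\<close> are encircled once.\<close>

lemma has_contour_integral_power_pole:
  assumes z: "0 \<notin> path_image \<gamma>" "winding_number \<gamma> 0 = 1"
    and a: "a \<notin> path_image \<gamma>" "winding_number \<gamma> a = 1"
    and "m \<ge> 1"
  shows "((\<lambda>u. 1 / (u ^ m * (a - u))) has_contour_integral 0) \<gamma>"
proof (cases "a = 0")
  case True
  have "((\<lambda>u. - (1 / u ^ Suc m)) has_contour_integral 0) \<gamma>"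
    using has_contour_integral_neg[OF has_contour_integral_inverse_power[of "Suc m"]] \<open>m \<ge> 1\<close> z
    by simp
  then show ?thesis
  proof (rule has_contour_integral_eq)
    fix u assume "u \<in> path_image \<gamma>"
    then have "u \<noteq> 0" using z by auto
    then show "- (1 / u ^ Suc m) = 1 / (u ^ m * (a - u))" using True by (simp add: field_simps)
  qed
next
  case False
  have ia: "((\<lambda>u. 1 / (a - u)) has_contour_integral - (2 * pi * \<i>)) \<gamma>"
    using has_contour_integral_neg[OF has_contour_integral_inverse_sub[OF a]]
    by (rule has_contour_integral_eq) (auto simp: divide_simps)
  show ?thesis
    using \<open>m \<ge> 1\<close>
  proof (induction m rule: dec_induct)
    case base
    have "((\<lambda>u. (1 / u + 1 / (a - u)) / a) has_contour_integral (2 * pi * \<i> + - (2 * pi * \<i>)) / a) \<gamma>"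
      using has_contour_integral_inverse_sub[OF z] ia by (intro has_contour_integral_div has_contour_integral_add) auto
    then have "((\<lambda>u. (1 / u + 1 / (a - u)) / a) has_contour_integral 0) \<gamma>" by simp
    then show ?case
    proof (rule has_contour_integral_eq)
      fix u assume "u \<in> path_image \<gamma>"
      then have "u \<noteq> 0" "u \<noteq> a" using z a by auto
      then show "(1 / u + 1 / (a - u)) / a = 1 / (u ^ 1 * (a - u))"
        using False by (simp add: field_simps)
    qed
  next
    case (step m)
    have "((\<lambda>u. (1 / u ^ Suc m + 1 / (u ^ m * (a - u))) / a) has_contour_integral (0 + 0) / a) \<gamma>"
      using step z by (intro has_contour_integral_div has_contour_integral_add has_contour_integral_inverse_power) auto
    then have "((\<lambda>u. (1 / u ^ Suc m + 1 / (u ^ m * (a - u))) / a) has_contour_integral 0) \<gamma>" by simp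
    then show ?case
    proof (rule has_contour_integral_eq)
      fix u assume "u \<in> path_image \<gamma>"
      then have "u \<noteq> 0" "u \<noteq> a" using z a by auto
      then show "(1 / u ^ Suc m + 1 / (u ^ m * (a - u))) / a = 1 / (u ^ Suc m * (a - u))"
        using False by (simp add: field_simps)
    qed
  qed
qed

lemma has_contour_integral_poly_shift:
  assumes z: "0 \<notin> path_image \<gamma>" "winding_number \<gamma> 0 = 1"
    and a: "a \<notin> path_image \<gamma>" "winding_number \<gamma> a = 1"
  shows "((\<lambda>u. poly_of_real q u / ((a - u) * u ^ n))
           has_contour_integral (- (2 * pi * \<i>) * poly_of_real (poly_shift n q) a)) \<gamma>"
proof -
  define P where "P = poly_shift n q"
  have poles: "((\<lambda>u. \<Sum>k<n. of_real (coeff q k) * (1 / (u ^ (n - k) * (a - u))))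
      has_contour_integral (\<Sum>k<n. of_real (coeff q k) * 0)) \<gamma>"
    by (intro has_contour_integral_sum has_contour_integral_lmul has_contour_integral_power_pole[OF z a]) auto
  have "((\<lambda>u. poly_of_real P u / (u - a)) has_contour_integral
      (2 * pi * \<i> * winding_number \<gamma> a * poly_of_real P a)) \<gamma>"
    using a by (intro Cauchy_integral_formula_global[where S=UNIV] valid closed holomorphic_on_poly_of_real) auto
  from has_contour_integral_add[OF poles has_contour_integral_neg[OF this]]
  have "((\<lambda>u. (\<Sum>k<n. of_real (coeff q k) * (1 / (u ^ (n - k) * (a - u)))) - poly_of_real P u / (u - a))
      has_contour_integral (- (2 * pi * \<i>) * poly_of_real P a)) \<gamma>"
    using a by simp
  then show ?thesis
    unfolding P_def
  proof (rule has_contour_integral_eq)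
    fix u assume "u \<in> path_image \<gamma>"
    then have "u \<noteq> 0" "u \<noteq> a" using z a by auto
    then show "(\<Sum>k<n. of_real (coeff q k) * (1 / (u ^ (n - k) * (a - u))))
        - poly_of_real (poly_shift n q) u / (u - a) = poly_of_real q u / ((a - u) * u ^ n)"
      by (rule poly_of_real_div_partial_fractions[symmetric])
  qed
qed

end

lemma polynomial_path_homologous:
  assumes S: "open S" and C: "valid_path C" "path_image C \<subseteq> S" "pathfinish C = pathstart C"
  obtains p where "polynomial_function p" "pathfinish p = pathstart p" "path_image p \<subseteq> S"
    "\<And>a. a \<notin> S \<Longrightarrow> winding_number p a = winding_number C a"
    "\<And>G. G holomorphic_on S \<Longrightarrow> contour_integral p G = contour_integral C G"
proof -
  have path: "path C" using C(1) by (rule valid_path_imp_path)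
  obtain d where d: "d > 0" and near: "\<And>g h. valid_path g \<and> valid_path h \<and>
        (\<forall>t\<in>{0..1}. cmod (g t - C t) < d \<and> cmod (h t - C t) < d) \<and>
        pathstart h = pathstart g \<and> pathfinish h = pathfinish g \<Longrightarrow>
        path_image g \<subseteq> S \<and> path_image h \<subseteq> S \<and>
        (\<forall>f. f holomorphic_on S \<longrightarrow> contour_integral h f = contour_integral g f)"
    using contour_integral_nearby_ends[OF S path C(2)] by blast
  obtain p where p: "polynomial_function p" "pathstart p = pathstart C" "pathfinish p = pathfinish C"
    "\<And>t. t \<in> {0..1} \<Longrightarrow> norm (p t - C t) < d"
    using path_approx_polynomial_function[OF path d] by metis
  have vp: "valid_path p" using p(1) by (rule valid_path_polynomial_function)
  have image: "path_image p \<subseteq> S" and ci: "\<And>G. G holomorphic_on S \<Longrightarrow> contour_integral p G = contour_integral C G"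
    using near[of C p] C(1) vp p d by auto
  have "winding_number p a = winding_number C a" if "a \<notin> S" for a
  proof -
    have "(\<lambda>w. 1 / (w - a)) holomorphic_on S" using that by (intro holomorphic_intros) auto
    moreover have "a \<notin> path_image p" "a \<notin> path_image C" using that image C(2) by auto
    ultimately show ?thesis
      using ci by (simp add: winding_number_valid_path vp C(1))
  qed
  with that p image ci C(3) show ?thesis by auto
qed

lemma contour_integral'_eq_contour_integral: "contour_integral' = contour_integral"
  unfolding contour_integral'_def[abs_def] contour_integral_def[abs_def] has_contour_integral'_def
    has_contour_integral_def contour_integrable_on_def by simp

lemma winding_number'_eq_winding_number:
  "valid_path g \<Longrightarrow> z \<notin> path_image g \<Longrightarrow> winding_number' g z = winding_number g z"
  by (simp add: winding_number'_def contour_integral'_eq_contour_integral winding_number_valid_path)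

section \<open>Stieltjes transforms of compactly supported measures\<close>

lemma continuous_on_clamp [continuous_intros]:
  fixes f :: "'a::topological_space \<Rightarrow> 'b::euclidean_space"
  shows "continuous_on S f \<Longrightarrow> continuous_on S (\<lambda>x. clamp a c (f x))"
  by (rule continuous_on_compose2[OF clamp_continuous_on[OF continuous_on_id]]) auto

lemma borel_measurable_clamp [measurable]: "(clamp a c :: 'a::euclidean_space \<Rightarrow> 'a) \<in> borel_measurable borel"
  by (intro borel_measurable_continuous_onI continuous_on_clamp continuous_on_id)

lemma lborel_integral_indicator_eq_integral:
  fixes h :: "real \<Rightarrow> 'a::euclidean_space"
  assumes "continuous_on {a..c} h"
  shows "(\<integral>t. indicator {a..c} t *\<^sub>R h t \<partial>lborel) = integral {a..c} h"
proof -
  have "set_integrable lborel {a..c} h"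
    unfolding set_integrable_def by (rule borel_integrable_compact) (auto simp: assms)
  then show ?thesis
    using set_borel_integral_eq_integral(2) by (simp add: set_lebesgue_integral_def)
qed

locale supported_measure =
  fixes M :: "real measure" and b :: real
  assumes finite_M: "finite_measure M" and sets_M: "sets M = sets borel"
    and b_nonneg: "0 \<le> b" and AE_in_interval: "AE x in M. x \<in> {0..b}"
begin

definition seg :: "complex set" where
  "seg = complex_of_real ` {0..b}"

lemma compact_seg: "compact seg"
  unfolding seg_def by (intro compact_continuous_image continuous_intros) auto

lemma open_Compl_seg: "open (- seg)"
  using compact_seg by (simp add: open_Compl compact_imp_closed)

lemma zero_in_seg: "0 \<in> seg"
  using b_nonneg by (auto simp: seg_def)

lemma clamp_mem: "clamp 0 b x \<in> {0..b}"
  using clamp_in_interval[of 0 b x] b_nonneg by simp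

lemma of_real_clamp_in_seg: "complex_of_real (clamp 0 b x) \<in> seg"
  using clamp_mem by (simp add: seg_def)

lemma AE_clamp_eq: "AE x in M. clamp 0 b x = x"
  using AE_in_interval by (auto elim!: AE_mp)

lemma integral_clamp:
  "h \<in> borel_measurable borel \<Longrightarrow> (\<integral>x. h (clamp 0 b x) \<partial>M) = (\<integral>x. h x \<partial>M)"
  using AE_clamp_eq by (intro integral_cong_AE) (auto simp: measurable_cong_sets[OF sets_M refl] elim!: AE_mp)

lemma borel_measurable_continuous: "continuous_on UNIV h \<Longrightarrow> h \<in> borel_measurable M"
  using borel_measurable_continuous_onI measurable_cong_sets sets_M by blast

lemma integrable_clamp:
  fixes H :: "real \<Rightarrow> 'a::{banach, second_countable_topology}"
  assumes "continuous_on {0..b} H"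
  shows "integrable M (\<lambda>x. H (clamp 0 b x))"
proof -
  have "bounded (range (\<lambda>x. H (clamp 0 b x)))"
    using assms by (intro clamp_bounded compact_imp_bounded compact_continuous_image) auto
  then obtain B where "\<And>x. norm (H (clamp 0 b x)) \<le> B"
    by (auto simp: bounded_iff)
  moreover have "(\<lambda>x. H (clamp 0 b x)) \<in> borel_measurable M"
    using assms by (intro borel_measurable_continuous clamp_continuous_on) auto
  ultimately show ?thesis
    by (intro finite_measure.integrable_const_bound[OF finite_M]) auto
qed

lemma norm_integral_le:
  fixes h :: "real \<Rightarrow> 'a::{banach, second_countable_topology}"
  assumes "integrable M h" "\<And>x. norm (h x) \<le> B"
  shows "norm (\<integral>x. h x \<partial>M) \<le> B * measure M (space M)"
proof -
  have "norm (\<integral>x. h x \<partial>M) \<le> (\<integral>x. norm (h x) \<partial>M)"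
    by (rule integral_norm_bound)
  also have "\<dots> \<le> (\<integral>x. B \<partial>M)"
    using assms finite_measure.integrable_const[OF finite_M] by (intro integral_mono) auto
  finally show ?thesis by (simp add: mult.commute)
qed

lemma margin_Compl_seg:
  assumes "u \<notin> seg"
  obtains e where "e > 0" "\<And>y. y \<in> {0..b} \<Longrightarrow> e \<le> norm (complex_of_real y - u)"
proof -
  obtain e where e: "e > 0" "ball u e \<subseteq> - seg"
    using open_Compl_seg assms open_contains_ball by blast
  have "e \<le> norm (complex_of_real y - u)" if "y \<in> {0..b}" for y
  proof (rule ccontr)
    assume "\<not> ?thesis"
    then have "complex_of_real y \<in> ball u e" by (simp add: dist_norm norm_minus_commute)
    then show False using e that by (auto simp: seg_def)
  qed
  with e that show ?thesis by blast
qed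

text \<open>Integrands are evaluated at \<open>clamp 0 b x\<close>, which is \<open>M\<close>-a.e.\ equal to \<open>x\<close>; this makes
  them bounded and continuous on all of \<open>\<real>\<close>.\<close>

definition stieltjes :: "(real \<Rightarrow> complex) \<Rightarrow> complex \<Rightarrow> complex" where
  "stieltjes g u = (\<integral>x. g (clamp 0 b x) / (complex_of_real (clamp 0 b x) - u) \<partial>M)"

lemma continuous_on_divide_sub:
  assumes "continuous_on {0..b} g" "u \<notin> seg"
  shows "continuous_on {0..b} (\<lambda>y. g y / (complex_of_real y - u))"
  using assms by (intro continuous_intros) (auto simp: seg_def)

lemma stieltjes_diff:
  assumes g: "continuous_on {0..b} g" and u: "u \<notin> seg" and v: "v \<notin> seg"
  shows "stieltjes g v - stieltjes g u = (v - u) * stieltjes (\<lambda>y. g y / (complex_of_real y - u)) v"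
proof -
  have "stieltjes g v - stieltjes g u
      = (\<integral>x. g (clamp 0 b x) / (complex_of_real (clamp 0 b x) - v)
            - g (clamp 0 b x) / (complex_of_real (clamp 0 b x) - u) \<partial>M)"
    unfolding stieltjes_def
    using integrable_clamp[OF continuous_on_divide_sub[OF g u]]
      integrable_clamp[OF continuous_on_divide_sub[OF g v]]
    by (simp add: Bochner_Integration.integral_diff)
  also have "\<dots> = (\<integral>x. (v - u) * (g (clamp 0 b x) / (complex_of_real (clamp 0 b x) - u)
            / (complex_of_real (clamp 0 b x) - v)) \<partial>M)"
  proof (rule Bochner_Integration.integral_cong [OF refl])
    fix x
    have "complex_of_real (clamp 0 b x) \<noteq> u" "complex_of_real (clamp 0 b x) \<noteq> v"
      using of_real_clamp_in_seg u v by auto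
    then show "g (clamp 0 b x) / (complex_of_real (clamp 0 b x) - v)
        - g (clamp 0 b x) / (complex_of_real (clamp 0 b x) - u)
        = (v - u) * (g (clamp 0 b x) / (complex_of_real (clamp 0 b x) - u)
            / (complex_of_real (clamp 0 b x) - v))"
      by (simp add: field_simps)
  qed
  also have "\<dots> = (v - u) * stieltjes (\<lambda>y. g y / (complex_of_real y - u)) v"
    unfolding stieltjes_def by (rule integral_mult_right_zero)
  finally show ?thesis .
qed

lemma eventually_norm_stieltjes_le:
  assumes g: "continuous_on {0..b} g" and u: "u \<notin> seg"
  obtains C where "\<forall>\<^sub>F v in at u. norm (stieltjes g v) \<le> C"
proof -
  obtain e where e: "e > 0" "\<And>y. y \<in> {0..b} \<Longrightarrow> e \<le> norm (complex_of_real y - u)"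
    using margin_Compl_seg[OF u] by blast
  obtain B where B: "\<forall>y\<in>{0..b}. norm (g y) \<le> B"
    using compact_imp_bounded[OF compact_continuous_image[OF g compact_Icc]] by (auto simp: bounded_iff)
  have B_nonneg: "0 \<le> B"
    using B b_nonneg norm_ge_zero[of "g 0"] by (meson atLeastAtMost_iff order.refl order.trans)
  have bound: "norm (stieltjes g v) \<le> B / (e / 2) * measure M (space M)" if v: "dist v u < e / 2" for v
  proof -
    have far: "e / 2 \<le> norm (complex_of_real y - v)" if "y \<in> {0..b}" for y
      using e(2)[OF that] v norm_triangle_ineq[of "complex_of_real y - v" "v - u"]
      by (simp add: dist_norm)
    have "v \<notin> seg"
    proof
      assume "v \<in> seg"
      then obtain y where "y \<in> {0..b}" "v = complex_of_real y" by (auto simp: seg_def)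
      then show False using far[of y] e(1) by simp
    qed
    have "norm (g (clamp 0 b x) / (complex_of_real (clamp 0 b x) - v)) \<le> B / (e / 2)" for x
      using B clamp_mem far[OF clamp_mem] e(1) B_nonneg
      unfolding norm_divide by (intro frac_le) auto
    then show ?thesis
      unfolding stieltjes_def
      by (intro norm_integral_le integrable_clamp continuous_on_divide_sub[OF g \<open>v \<notin> seg\<close>])
  qed
  have "\<forall>\<^sub>F v in at u. dist v u < e / 2"
    using e(1) by (auto simp: eventually_at intro!: exI[of _ "e / 2"])
  then show ?thesis
    by (rule that[OF eventually_mono]) (rule bound)
qed

lemma isCont_stieltjes:
  assumes g: "continuous_on {0..b} g" and u: "u \<notin> seg"
  shows "isCont (stieltjes g) u"
proof -
  obtain C where C: "\<forall>\<^sub>F v in at u. norm (stieltjes (\<lambda>y. g y / (complex_of_real y - u)) v) \<le> C"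
    using eventually_norm_stieltjes_le[OF continuous_on_divide_sub[OF g u] u] by blast
  have "\<forall>\<^sub>F v in at u. v \<in> - seg"
    using u by (intro eventually_at_in_open' open_Compl_seg) auto
  with C have "\<forall>\<^sub>F v in at u. norm (stieltjes g v - stieltjes g u) \<le> C * norm (v - u)"
  proof eventually_elim
    case (elim v)
    then show ?case
      using g u by (simp add: stieltjes_diff norm_mult mult.commute[of _ "norm (v - u)"] mult_left_mono)
  qed
  then have "((\<lambda>v. stieltjes g v - stieltjes g u) \<longlongrightarrow> 0) (at u)"
    by (rule Lim_null_comparison) (auto intro!: tendsto_eq_intros)
  then show ?thesis
    by (simp add: isCont_def LIM_zero_iff)
qed

lemma has_field_derivative_stieltjes:
  assumes g: "continuous_on {0..b} g" and u: "u \<notin> seg"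
  shows "(stieltjes g has_field_derivative stieltjes (\<lambda>y. g y / (complex_of_real y - u)) u) (at u)"
  unfolding has_field_derivative_iff
proof (rule Lim_transform_eventually)
  show "((\<lambda>v. stieltjes (\<lambda>y. g y / (complex_of_real y - u)) v)
      \<longlongrightarrow> stieltjes (\<lambda>y. g y / (complex_of_real y - u)) u) (at u)"
    using isCont_stieltjes[OF continuous_on_divide_sub[OF g u] u] by (simp add: isCont_def)
  have "\<forall>\<^sub>F v in at u. v \<in> - seg - {u}"
    using u by (intro eventually_at_in_open open_Compl_seg) auto
  then show "\<forall>\<^sub>F v in at u. stieltjes (\<lambda>y. g y / (complex_of_real y - u)) v
      = (stieltjes g v - stieltjes g u) / (v - u)"
    by eventually_elim (use g u in \<open>simp add: stieltjes_diff\<close>)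
qed

lemma holomorphic_on_stieltjes: "continuous_on {0..b} g \<Longrightarrow> stieltjes g holomorphic_on - seg"
  using has_field_derivative_stieltjes open_Compl_seg
  by (auto simp: holomorphic_on_open)

lemma integrable_pair_lborel_Icc:
  fixes H :: "real \<times> real \<Rightarrow> complex"
  assumes cont: "continuous_on UNIV H" and bound: "\<And>z. norm (H z) \<le> B"
  shows "integrable (M \<Otimes>\<^sub>M lborel) (\<lambda>(x, t). indicator {0..1} t *\<^sub>R H (x, t))"
proof (rule Bochner_Integration.integrable_bound)
  interpret pair_sigma_finite M lborel
    using finite_M by (simp add: pair_sigma_finite_def finite_measure_def lborel.sigma_finite_measure_axioms)
  have space: "space M = UNIV"
    using sets_eq_imp_space_eq[OF sets_M] by simp
  have sets: "sets (M \<Otimes>\<^sub>M lborel) = sets (borel :: (real \<times> real) measure)"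
    using sets_pair_measure_cong[OF sets_M sets_lborel] by (simp only: borel_prod)
  have box: "UNIV \<times> {0..1::real} \<in> sets (M \<Otimes>\<^sub>M lborel)"
    using space sets.top[of M] by (intro pair_measureI) auto
  have "emeasure (M \<Otimes>\<^sub>M lborel) (UNIV \<times> {0..1::real}) = emeasure M UNIV * emeasure lborel {0..1::real}"
    using space sets.top[of M] by (intro lborel.emeasure_pair_measure_Times) auto
  also have "\<dots> < \<infinity>"
    using finite_measure.emeasure_finite[OF finite_M, of UNIV]
    by (simp add: ennreal_mult_less_top top.not_eq_extremum)
  finally show "integrable (M \<Otimes>\<^sub>M lborel) (\<lambda>z. B * indicator (UNIV \<times> {0..1::real}) z)"
    using box by (intro integrable_mult_right integrable_real_indicator) auto
  have [measurable]: "H \<in> borel_measurable (M \<Otimes>\<^sub>M lborel)"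
    using borel_measurable_continuous_onI[OF cont] measurable_cong_sets[OF sets refl] by blast
  show "(\<lambda>(x, t). indicator {0..1} t *\<^sub>R H (x, t)) \<in> borel_measurable (M \<Otimes>\<^sub>M lborel)"
    unfolding split_beta' by measurable
  have "0 \<le> B" using bound[of 0] norm_ge_zero order_trans by blast
  then show "AE z in M \<Otimes>\<^sub>M lborel. norm ((\<lambda>(x, t). indicator {0..1} t *\<^sub>R H (x, t)) z)
      \<le> norm (B * indicator (UNIV \<times> {0..1::real}) z)"
    using bound by (auto simp: indicator_def split: prod.splits)
qed

end

text \<open>Along a polynomial loop the integrand is jointly continuous and bounded once both variables
  are clamped, so Fubini's theorem exchanges the two integrations; the inner contour integral is
  \<open>has_contour_integral_poly_shift\<close>.\<close>

locale polynomial_loop_around = supported_measure +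
  fixes p p' :: "real \<Rightarrow> complex"
  assumes polynomial_p: "polynomial_function p" and polynomial_p': "polynomial_function p'"
    and derivative_p: "\<And>t. (p has_vector_derivative p' t) (at t)"
    and closed_p: "pathfinish p = pathstart p" and image_p: "path_image p \<subseteq> - seg"
    and winding_p: "\<And>a. a \<in> seg \<Longrightarrow> winding_number p a = 1"
begin

sublocale closed_valid_path p
  using valid_path_polynomial_function[OF polynomial_p] closed_p by unfold_locales

lemma vector_derivative_p: "vector_derivative p (at t) = p' t"
  using derivative_p by (rule vector_derivative_at)

lemma continuous_on_p: "continuous_on UNIV p" and continuous_on_p': "continuous_on UNIV p'"
  using continuous_on_polymonial_function[OF polynomial_p] continuous_on_polymonial_function[OF polynomial_p'] .

lemma p_notin_seg:
  assumes "t \<in> {0..1}"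
  shows "p t \<notin> seg"
proof -
  have "p t \<in> path_image p" using assms by (simp add: path_image_def)
  then show ?thesis using image_p by auto
qed

lemma clamp_01: "clamp 0 1 t \<in> {0..1::real}"
  using clamp_in_interval[of 0 1 t] by simp

definition loop_integrand :: "(real \<Rightarrow> complex) \<Rightarrow> real poly \<Rightarrow> nat \<Rightarrow> real \<times> real \<Rightarrow> complex" where
  "loop_integrand g q n z = g (clamp 0 b (fst z)) * (poly_of_real q (p (clamp 0 1 (snd z)))
     / ((complex_of_real (clamp 0 b (fst z)) - p (clamp 0 1 (snd z))) * p (clamp 0 1 (snd z)) ^ n))
     * p' (clamp 0 1 (snd z))"

lemma continuous_on_loop_integrand:
  assumes "continuous_on {0..b} g"
  shows "continuous_on UNIV (loop_integrand g q n)"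
proof -
  have "complex_of_real (clamp 0 b x) \<noteq> p (clamp 0 1 t)" for x t
    using p_notin_seg[OF clamp_01, of t] of_real_clamp_in_seg[of x] by auto
  moreover have "p (clamp 0 1 t) \<noteq> 0" for t
    using p_notin_seg[OF clamp_01, of t] zero_in_seg by auto
  ultimately show ?thesis
    unfolding loop_integrand_def
    by (intro continuous_intros continuous_on_compose2[OF continuous_on_p]
        continuous_on_compose2[OF continuous_on_p'] continuous_on_compose2[OF assms]
        continuous_on_compose2[OF holomorphic_on_imp_continuous_on[OF holomorphic_on_poly_of_real]])
       (use clamp_mem in auto)
qed

lemma bounded_loop_integrand:
  assumes "continuous_on {0..b} g"
  obtains B where "\<And>z. norm (loop_integrand g q n z) \<le> B"
proof -
  have "compact (loop_integrand g q n ` ({0..b} \<times> {0..1}))"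
    by (intro compact_continuous_image continuous_on_subset[OF continuous_on_loop_integrand[OF assms]]
        compact_Times) auto
  then obtain B where B: "\<And>w. w \<in> loop_integrand g q n ` ({0..b} \<times> {0..1}) \<Longrightarrow> norm w \<le> B"
    using compact_imp_bounded bounded_iff by metis
  have "clamp 0 b (clamp 0 b x) = clamp 0 b x" "clamp 0 1 (clamp 0 1 t) = clamp 0 1 t" for x t :: real
    using clamp_mem clamp_01 by (simp_all add: clamp_cancel_cbox)
  then have "loop_integrand g q n z = loop_integrand g q n (clamp 0 b (fst z), clamp 0 1 (snd z))" for z
    by (simp only: loop_integrand_def fst_conv snd_conv)
  then have "norm (loop_integrand g q n z) \<le> B" for z
    by (intro B image_eqI[where x="(clamp 0 b (fst z), clamp 0 1 (snd z))"]) (use clamp_mem clamp_01 in auto)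
  with that show ?thesis by blast
qed

lemma integral_loop_integrand_M:
  assumes "t \<in> {0..1}"
  shows "(\<integral>x. loop_integrand g q n (x, t) \<partial>M) = poly_of_real q (p t) * stieltjes g (p t) / p t ^ n * p' t"
proof -
  have "loop_integrand g q n (x, t) = (poly_of_real q (p t) * p' t / p t ^ n)
      * (g (clamp 0 b x) / (complex_of_real (clamp 0 b x) - p t))" for x
    using assms by (simp add: loop_integrand_def divide_inverse mult_ac)
  then have "(\<integral>x. loop_integrand g q n (x, t) \<partial>M) = (poly_of_real q (p t) * p' t / p t ^ n) * stieltjes g (p t)"
    unfolding stieltjes_def by (simp only: integral_mult_right_zero)
  then show ?thesis by simp
qed

lemma integral_loop_integrand_lborel:
  assumes "continuous_on {0..b} g"
  shows "(\<integral>t. indicator {0..1} t *\<^sub>R loop_integrand g q n (x, t) \<partial>lborel)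
    = g (clamp 0 b x) * (- (2 * pi * \<i>) * poly_of_real (poly_shift n q) (complex_of_real (clamp 0 b x)))"
proof -
  define a where "a = complex_of_real (clamp 0 b x)"
  have "(\<integral>t. indicator {0..1} t *\<^sub>R loop_integrand g q n (x, t) \<partial>lborel)
      = integral {0..1} (\<lambda>t. loop_integrand g q n (x, t))"
    by (intro lborel_integral_indicator_eq_integral
        continuous_on_compose2[OF continuous_on_loop_integrand[OF assms]])
       (auto intro: continuous_intros)
  also have "\<dots> = contour_integral p (\<lambda>u. g (clamp 0 b x) * (poly_of_real q u / ((a - u) * u ^ n)))"
    unfolding contour_integral_integral vector_derivative_p
    by (rule integral_cong) (simp add: loop_integrand_def a_def)
  also have "\<dots> = g (clamp 0 b x) * (- (2 * pi * \<i>) * poly_of_real (poly_shift n q) a)"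
    using image_p winding_p of_real_clamp_in_seg zero_in_seg
    by (intro contour_integral_unique has_contour_integral_lmul has_contour_integral_poly_shift)
       (auto simp: a_def)
  finally show ?thesis by (simp add: a_def)
qed

lemma contour_integral_stieltjes_loop:
  assumes g: "continuous_on {0..b} g"
  shows "contour_integral p (\<lambda>u. poly_of_real q u * stieltjes g u / u ^ n)
     = - (2 * pi * \<i>) * (\<integral>x. g (clamp 0 b x)
          * poly_of_real (poly_shift n q) (complex_of_real (clamp 0 b x)) \<partial>M)"
proof -
  interpret pair_sigma_finite M lborel
    using finite_M by (simp add: pair_sigma_finite_def finite_measure_def lborel.sigma_finite_measure_axioms)
  obtain B where B: "\<And>z. norm (loop_integrand g q n z) \<le> B"
    using bounded_loop_integrand[OF g] by blast
  have "(\<lambda>u. poly_of_real q u * stieltjes g u / u ^ n) holomorphic_on - seg"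
    using zero_in_seg by (intro holomorphic_intros holomorphic_on_poly_of_real holomorphic_on_stieltjes[OF g]) auto
  from continuous_on_compose2[OF holomorphic_on_imp_continuous_on[OF this]
      continuous_on_subset[OF continuous_on_p, of "{0..1}"]]
  have "continuous_on {0..1} (\<lambda>t. poly_of_real q (p t) * stieltjes g (p t) / p t ^ n)"
    using p_notin_seg by blast
  then have "continuous_on {0..1} (\<lambda>t. poly_of_real q (p t) * stieltjes g (p t) / p t ^ n * p' t)"
    by (intro continuous_on_mult continuous_on_subset[OF continuous_on_p']) auto
  then have "contour_integral p (\<lambda>u. poly_of_real q u * stieltjes g u / u ^ n)
      = (\<integral>t. indicator {0..1} t *\<^sub>R (poly_of_real q (p t) * stieltjes g (p t) / p t ^ n * p' t) \<partial>lborel)"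
    unfolding contour_integral_integral vector_derivative_p
    by (rule lborel_integral_indicator_eq_integral[symmetric])
  also have "\<dots> = (\<integral>t. indicator {0..1} t *\<^sub>R (\<integral>x. loop_integrand g q n (x, t) \<partial>M) \<partial>lborel)"
    by (intro Bochner_Integration.integral_cong) (auto simp: integral_loop_integrand_M indicator_def)
  also have "\<dots> = (\<integral>x. (\<integral>t. indicator {0..1} t *\<^sub>R loop_integrand g q n (x, t) \<partial>lborel) \<partial>M)"
    using Fubini_integral[OF integrable_pair_lborel_Icc[OF continuous_on_loop_integrand[OF g] B]] by simp
  also have "\<dots> = - (2 * pi * \<i>) * (\<integral>x. g (clamp 0 b x)
          * poly_of_real (poly_shift n q) (complex_of_real (clamp 0 b x)) \<partial>M)"
    by (simp only: integral_loop_integrand_lborel[OF g] mult.left_commute[of "g _"] integral_mult_right_zero)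
  finally show ?thesis .
qed

end

context supported_measure
begin

lemma contour_integral_stieltjes:
  fixes f :: "real \<Rightarrow> real" and q :: "real poly" and C :: "real \<Rightarrow> complex"
  assumes f: "continuous_on UNIV f" and C: "valid_path C" "pathfinish C = pathstart C"
    and enclosed: "\<And>z. z \<in> seg \<Longrightarrow> z \<notin> path_image C \<and> winding_number C z = 1"
  shows "contour_integral C (\<lambda>u. (\<integral>x. complex_of_real (f x) * poly_of_real q u
              / (complex_of_real x - u) \<partial>M) / u ^ n)
     = - (2 * pi * \<i>) * of_real (\<integral>x. f x * poly (poly_shift n q) x \<partial>M)"
proof -
  define g where "g y = complex_of_real (f y)" for y
  have g: "continuous_on {0..b} g"
    unfolding g_def by (intro continuous_intros continuous_on_subset[OF f]) auto
  have [measurable]: "f \<in> borel_measurable borel" "(\<lambda>x. poly (poly_shift n q) x) \<in> borel_measurable borel"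
    using f by (auto intro!: borel_measurable_continuous_onI continuous_intros)
  have integrand: "(\<integral>x. complex_of_real (f x) * poly_of_real q u / (complex_of_real x - u) \<partial>M) / u ^ n
      = poly_of_real q u * stieltjes g u / u ^ n" for u
  proof -
    have "(\<integral>x. complex_of_real (f x) * poly_of_real q u / (complex_of_real x - u) \<partial>M)
        = (\<integral>x. poly_of_real q u * (g (clamp 0 b x) / (complex_of_real (clamp 0 b x) - u)) \<partial>M)"
      by (subst integral_clamp[symmetric]) (simp_all add: g_def mult_ac)
    also have "\<dots> = poly_of_real q u * stieltjes g u"
      unfolding stieltjes_def by (rule integral_mult_right_zero)
    finally show ?thesis by simp
  qed
  have "path_image C \<subseteq> - seg" using enclosed by auto
  then obtain p where p: "polynomial_function p" "pathfinish p = pathstart p" "path_image p \<subseteq> - seg"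
    "\<And>a. a \<in> seg \<Longrightarrow> winding_number p a = winding_number C a"
    "\<And>G. G holomorphic_on - seg \<Longrightarrow> contour_integral p G = contour_integral C G"
    using polynomial_path_homologous[OF open_Compl_seg C(1) _ C(2)] by auto
  have "contour_integral C (\<lambda>u. poly_of_real q u * stieltjes g u / u ^ n)
      = contour_integral p (\<lambda>u. poly_of_real q u * stieltjes g u / u ^ n)"
    using zero_in_seg
    by (intro p(5)[symmetric] holomorphic_intros holomorphic_on_poly_of_real holomorphic_on_stieltjes[OF g]) auto
  also have "\<dots> = - (2 * pi * \<i>) * (\<integral>x. g (clamp 0 b x)
          * poly_of_real (poly_shift n q) (complex_of_real (clamp 0 b x)) \<partial>M)"
  proof -
    obtain p' where "polynomial_function p'" "\<And>t. (p has_vector_derivative p' t) (at t)"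
      using has_vector_derivative_polynomial_function[OF p(1)] by blast
    then interpret polynomial_loop_around M b p p'
      using p enclosed
      by (intro polynomial_loop_around.intro[OF supported_measure_axioms] polynomial_loop_around_axioms.intro)
         auto
    show ?thesis by (rule contour_integral_stieltjes_loop[OF g])
  qed
  also have "(\<integral>x. g (clamp 0 b x) * poly_of_real (poly_shift n q) (complex_of_real (clamp 0 b x)) \<partial>M)
      = of_real (\<integral>x. f x * poly (poly_shift n q) x \<partial>M)"
    by (subst integral_complex_of_real[symmetric], subst integral_clamp[symmetric])
       (simp_all add: g_def poly_of_real_of_real)
  finally show ?thesis
    by (simp add: integrand)
qed

lemma contour_integral'_stieltjes:
  fixes f :: "real \<Rightarrow> real" and q :: "real poly" and C :: "real \<Rightarrow> complex"
  assumes f: "continuous_on UNIV f" and C: "pos_simple_contour_enclosing C seg"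
  shows "- contour_integral' C (\<lambda>u. (\<integral>x. complex_of_real (f x) * poly_of_real q u
              / (complex_of_real x - u) \<partial>M) / u ^ n) / (2 * pi * \<i>)
     = of_real (\<integral>x. f x * poly (poly_shift n q) x \<partial>M)"
proof -
  have valid: "valid_path C" "pathfinish C = pathstart C"
    using C by (simp_all add: pos_simple_contour_enclosing_def)
  have "contour_integral C (\<lambda>u. (\<integral>x. complex_of_real (f x) * poly_of_real q u
          / (complex_of_real x - u) \<partial>M) / u ^ n)
      = - (2 * pi * \<i>) * of_real (\<integral>x. f x * poly (poly_shift n q) x \<partial>M)"
    using C winding_number'_eq_winding_number[OF valid(1)]
    by (intro contour_integral_stieltjes[OF f valid]) (auto simp: pos_simple_contour_enclosing_def)
  then show ?thesis
    by (simp add: contour_integral'_eq_contour_integral)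
qed

end

text \<open>The complement of the support is covered by the countably many null intervals with
  rational end points.\<close>

lemma AE_in_msupport:
  fixes w :: "real measure"
  assumes sets: "sets w = sets borel"
  shows "AE x in w. x \<in> msupport w"
proof -
  define I where "I = {r \<in> \<rat> \<times> \<rat>. emeasure w {fst r<..<snd r} = 0}"
  have "countable I"
    by (rule countable_subset[of _ "\<rat> \<times> \<rat>"]) (auto simp: I_def countable_rat)
  then have null: "(\<Union>r\<in>I. {fst r<..<snd r}) \<in> null_sets w"
    by (rule null_sets_UN') (auto simp: I_def sets)
  have cover: "x \<in> (\<Union>r\<in>I. {fst r<..<snd r})" if "x \<notin> msupport w" for x
  proof -
    obtain e where e: "e > 0" "emeasure w {x - e<..<x + e} = 0"
      using \<open>x \<notin> msupport w\<close> by (auto simp: msupport_def not_less)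
    obtain r1 where r1: "r1 \<in> \<rat>" "x - e < r1" "r1 < x" using Rats_dense_in_real[of "x - e" x] e by auto
    obtain r2 where r2: "r2 \<in> \<rat>" "x < r2" "r2 < x + e" using Rats_dense_in_real[of x "x + e"] e by auto
    have "emeasure w {r1<..<r2} \<le> emeasure w {x - e<..<x + e}"
      using r1 r2 sets by (intro emeasure_mono) auto
    then have "(r1, r2) \<in> I" using r1 r2 e by (auto simp: I_def)
    then show ?thesis using r1 r2 by force
  qed
  show ?thesis
    by (rule AE_I'[OF null]) (use cover in auto)
qed

lemma msupport_nonneg:
  fixes w :: "real measure"
  assumes "sets w = sets borel" "emeasure w {..<0} = 0" "x \<in> msupport w"
  shows "0 \<le> x"
proof (rule ccontr)
  assume "\<not> 0 \<le> x"
  then have "- x > 0" by simp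
  with assms(3) have "emeasure w {x - (- x)<..<x + (- x)} > 0"
    unfolding msupport_def by blast
  moreover have "emeasure w {x - (- x)<..<x + (- x)} \<le> emeasure w {..<0}"
    using assms(1) by (intro emeasure_mono) auto
  ultimately show False using assms(2) by simp
qed

lemma AE_in_Icc_Sup_msupport:
  fixes w :: "real measure"
  assumes "prob_space w" "sets w = sets borel" "emeasure w {..<0} = 0" "compact (msupport w)"
  shows "0 \<le> Sup (msupport w)" "AE x in w. x \<in> {0..Sup (msupport w)}"
proof -
  have AE: "AE x in w. x \<in> msupport w"
    using assms(2) by (rule AE_in_msupport)
  have bdd: "bdd_above (msupport w)"
    using assms(4) by (simp add: compact_imp_bounded bounded_imp_bdd_above)
  have "msupport w \<noteq> {}"
    using AE prob_space.AE_False[OF assms(1)] by force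
  then show "0 \<le> Sup (msupport w)"
    using msupport_nonneg[OF assms(2,3)] cSup_upper[OF _ bdd] by (meson all_not_in_conv order_trans)
  show "AE x in w. x \<in> {0..Sup (msupport w)}"
    using AE msupport_nonneg[OF assms(2,3)] cSup_upper[OF _ bdd] by (auto elim!: AE_mp)
qed

context bd_dual_measures
begin

lemma supported_measure_w:
  assumes "compact (msupport w)"
  shows "supported_measure w (Sup (msupport w))"
  using AE_in_Icc_Sup_msupport[OF _ sets_w _ assms] w_orth
  by (intro supported_measure.intro) (simp_all add: orth_measure_def prob_space_def)

lemma supported_measure_wh:
  assumes "compact (msupport w)"
  shows "supported_measure wh (Sup (msupport w))"
proof (rule supported_measure.intro)
  show "finite_measure wh" "sets wh = sets borel"
    using wh_orth by (simp_all add: orth_measure_def prob_space_def)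
  have "prob_space w" "emeasure w {..<0} = 0"
    using w_orth by (simp_all add: orth_measure_def)
  from AE_in_Icc_Sup_msupport[OF this(1) sets_w this(2) assms]
  show "0 \<le> Sup (msupport w)" "AE x in wh. x \<in> {0..Sup (msupport w)}"
    unfolding wh_eq_x_weighted by (simp_all add: AE_x_weighted)
qed

lemma w_coeff_eq_contour_integral:
  assumes "compact (msupport w)"
    and "pos_simple_contour_enclosing C (complex_of_real ` {0..Sup (msupport w)})"
  shows "- contour_integral' C (\<lambda>u. (\<integral>x. complex_of_real (\<pi> i * poly (Q i) x) * poly_of_real P u
        / (complex_of_real x - u) \<partial>w) / u ^ n) / (2 * pi * \<i>) = of_real (w_coeff i (poly_shift n P))"
  using supported_measure.contour_integral'_stieltjes[OF supported_measure_w[OF assms(1)], of "\<lambda>x. \<pi> i * poly (Q i) x"]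
    assms(2)
  by (simp add: supported_measure.seg_def[OF supported_measure_w[OF assms(1)]] w_coeff_eq_integral
      mult.assoc continuous_intros)

lemma wh_coeff_eq_contour_integral:
  assumes "compact (msupport w)"
    and "pos_simple_contour_enclosing C (complex_of_real ` {0..Sup (msupport w)})"
  shows "- contour_integral' C (\<lambda>u. (\<integral>x. complex_of_real (\<pi>d i * poly (Qd i) x) * poly_of_real P u
        / (complex_of_real x - u) \<partial>wh) / u ^ n) / (2 * pi * \<i>) = of_real (wh_coeff i (poly_shift n P))"
  using supported_measure.contour_integral'_stieltjes[OF supported_measure_wh[OF assms(1)], of "\<lambda>x. \<pi>d i * poly (Qd i) x"]
    assms(2)
  by (simp add: supported_measure.seg_def[OF supported_measure_wh[OF assms(1)]] wh_coeff_eq_integral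
      mult.assoc continuous_intros)

end

theorem lemma10p1:
  fixes la mu :: "nat \<Rightarrow> real" and w wh :: "real measure" and C :: "real \<Rightarrow> complex"
  assumes la_pos: "\<And>k. la k > 0"
    and mu0: "mu 0 = 0"
    and mu_pos: "\<And>k. k \<ge> 1 \<Longrightarrow> mu k > 0"
    and series1: "(\<Sum>j. ennreal (1 / (la j * bd_pi la mu j) * (\<Sum>i\<le>j. bd_pi la mu i))) = \<infinity>"
    and series2: "(\<Sum>j. ennreal (1 / (la j * bd_pi la mu j))
                      * (\<Sum>i. ennreal (if j < i then bd_pi la mu i else 0))) = \<infinity>"
    and w_orth: "orth_measure la mu w"
    and w_unique: "\<And>m. orth_measure la mu m \<Longrightarrow> m = w"
    and wh_orth: "orth_measure (dual_la la mu) (dual_mu la mu) wh"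
    and wh_unique: "\<And>m. orth_measure (dual_la la mu) (dual_mu la mu) m \<Longrightarrow> m = wh"
    and supp_compact: "compact (msupport w)"
    and contour: "pos_simple_contour_enclosing C (complex_of_real ` {0 .. Sup (msupport w)})"
  shows "\<forall>i j.
     (\<forall>n\<ge>1. kconv_list (concat (replicate n [phi la mu, \<lambda>a b. phihat la mu a b / la 0])) i j
        = - contour_integral' C (\<lambda>u.
              (\<integral>x. complex_of_real (bd_pi la mu i * bdQ la mu i x) * bdQ la mu j u
                   / (complex_of_real x - u) \<partial>w) / u ^ n) / (2 * pi * \<i>))
   \<and> (\<forall>n. kconv_list (concat (replicate n [phi la mu, \<lambda>a b. phihat la mu a b / la 0]) @ [phi la mu]) i j
        = - contour_integral' C (\<lambda>u.
              (\<integral>x. complex_of_real (bd_pi la mu i * bdQ la mu i x)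
                   * bdQ (dual_la la mu) (dual_mu la mu) j u
                   / (complex_of_real x - u) \<partial>w) / u ^ n) / (2 * pi * \<i>))
   \<and> (\<forall>n\<ge>1. kconv_list (concat (replicate n [\<lambda>a b. phihat la mu a b / la 0, phi la mu])) i j
        = - contour_integral' C (\<lambda>u.
              (\<integral>x. complex_of_real (bd_pi (dual_la la mu) (dual_mu la mu) i
                        * bdQ (dual_la la mu) (dual_mu la mu) i x)
                   * bdQ (dual_la la mu) (dual_mu la mu) j u
                   / (complex_of_real x - u) \<partial>wh) / u ^ n) / (2 * pi * \<i>))
   \<and> (\<forall>n\<ge>1. kconv_list (concat (replicate (n - 1) [\<lambda>a b. phihat la mu a b / la 0, phi la mu])
                          @ [\<lambda>a b. phihat la mu a b / la 0]) i j
        = - contour_integral' C (\<lambda>u.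
              (\<integral>x. complex_of_real (bd_pi (dual_la la mu) (dual_mu la mu) i
                        * bdQ (dual_la la mu) (dual_mu la mu) i x)
                   * bdQ la mu j u
                   / (complex_of_real x - u) \<partial>wh) / u ^ n) / (2 * pi * \<i>))"
proof -
  interpret bd_dual_measures la mu w wh
    using la_pos mu0 mu_pos w_orth wh_orth wh_unique by unfold_locales
  show ?thesis
    unfolding bdQ_eq_poly_of_real poly_of_real_real
      w_coeff_eq_contour_integral[OF supp_compact contour] wh_coeff_eq_contour_integral[OF supp_compact contour]
    using kconv_list_ending_phihat0
    by (simp add: kconv_list_starting_phi kconv_list_ending_phi kconv_list_starting_phihat0)
qed

end
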